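(* Let $d\ge 1$, let $s$ be an integer with $1<s<2^d$, write $s=j\cdot 2^k$ with $j$ odd and $k\ge 0$, and let $n\ge d+1$. Then for every $A\subseteq\mathbb{F}_2^n$, \[\lambda^*(n,d,s,A)\le 1-\frac{2^{d-k}-1}{2^{d+1}-1}.\]
   Context: For integers $n\ge d\ge 1$, a $d$-flat in $\mathbb{F}_2^n$ is a set $x_0+U$ with $x_0\in\mathbb{F}_2^n$ and $U$ a $d$-dimensional linear subspace of $\mathbb{F}_2^n$. For $A\subseteq\mathbb{F}_2^n$ and an integer $0\le s\le 2^d$, $\lambda^*(n,d,s,A)$ denotes the fraction of $d$-flats $Q$ in $\mathbb{F}_2^n$ with $|Q\cap A|=s$. *)

theory Defs
  imports "HOL-Analysis.Analysis" "HOL-Library.Z2"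
begin

text \<open>F_2^n is modelled as the type bit ^ 'n with CARD('n) = n; it is a vector
  space over the field bit via scalar multiplication (*s).\<close>

definition flats :: "nat \<Rightarrow> ((bit ^ 'n) set) set" where
  "flats d = {(\<lambda>u. x0 + u) ` U | x0 U. vec.subspace U \<and> vec.dim U = d}"

definition lambda_star :: "nat \<Rightarrow> nat \<Rightarrow> (bit ^ 'n) set \<Rightarrow> real" where
  "lambda_star d s A =
     real (card {Q \<in> flats d. card (Q \<inter> A) = s}) / real (card (flats d :: ((bit ^ 'n) set) set))"

end

theory Submission
  imports Defs
begin

text \<open>Double count pairs \<open>Q \<subseteq> R\<close> of a \<open>d\<close>-flat and a \<open>(d+1)\<close>-flat. Every \<open>d\<close>-flat lies in
  \<open>2^(n-d) - 1\<close> flats of dimension \<open>d+1\<close>, and a \<open>(d+1)\<close>-flat \<open>R = x0 + U\<close> contains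
  \<open>2 (2^(d+1) - 1)\<close> flats of dimension \<open>d\<close>: the two level sets of each nonzero linear
  functional \<open>\<phi>\<close> on \<open>U\<close>. If \<open>|R \<inter> A| \<noteq> 2s\<close>, at most one level set of each \<open>\<phi>\<close> meets \<open>A\<close> in
  \<open>s\<close> points. If \<open>|R \<inter> A| = 2s\<close>, both do exactly when the Fourier coefficient of \<open>R \<inter> A\<close> at
  \<open>\<phi>\<close> vanishes; as \<open>2^(k+2)\<close> does not divide \<open>2s\<close>, at least \<open>2^(d-k)\<close> of these coefficients
  are nonzero. So at most \<open>2 (2^(d+1) - 2^(d-k))\<close> of the \<open>d\<close>-flats in \<open>R\<close> meet \<open>A\<close> in \<open>s\<close>
  points, and averaging over \<open>R\<close> gives the bound.\<close>

lemma double_counting_le: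
  fixes I :: "'a \<Rightarrow> 'b \<Rightarrow> bool"
  assumes "finite S" "finite T" "S' \<subseteq> S"
    and "\<And>x. x \<in> S \<Longrightarrow> card {y \<in> T. I x y} = c" "c > 0"
    and "\<And>y. y \<in> T \<Longrightarrow> card {x \<in> S. I x y} = m"
    and "\<And>y. y \<in> T \<Longrightarrow> card {x \<in> S'. I x y} \<le> g"
  shows "card S' * m \<le> g * card S"
proof -
  have "finite S'"
    using assms(1,3) by (rule finite_subset[rotated])
  have "card S' * c = (\<Sum>x\<in>S'. card {y \<in> T. I x y})"
    using assms(3,4) by (simp add: subset_iff)
  also have "\<dots> = (\<Sum>y\<in>T. card {x \<in> S'. I x y})"
    using \<open>finite S'\<close> assms(2) by (intro sum_multicount_gen) auto
  also have "\<dots> \<le> card T * g"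
    using assms(7) sum_bounded_above[of T "\<lambda>y. card {x \<in> S'. I x y}" g] by simp
  finally have good: "card S' * c \<le> card T * g" .
  have all: "card S * c = m * card T"
    using assms(1,2,4,6) sum_multicount[of S T "\<lambda>x y. I x y" m] by simp
  have "card S' * m * c = (card S' * c) * m"
    by (simp add: ac_simps)
  also have "\<dots> \<le> (card T * g) * m"
    using good by (rule mult_right_mono) simp
  also have "\<dots> = g * card S * c"
    using all by (simp add: ac_simps)
  finally show ?thesis
    using \<open>c > 0\<close> by simp
qed

lemma of_nat_ratio_le:
  fixes a b x y :: nat
  assumes "a * y \<le> x * b" "0 < y"
  shows "real a / real b \<le> real x / real y"
proof (cases "b = 0")
  case False
  have "real a * real y \<le> real x * real b"
    using assms(1) by (metis of_nat_le_iff of_nat_mult)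
  then show ?thesis
    using False assms(2) by (simp add: divide_simps)
qed simp

declare add_bit_eq_xor [simp del]

lemma UNIV_bit: "(UNIV :: bit set) = {0, 1}"
  by auto

instance bit :: finite
  by standard (simp add: UNIV_bit)

lemma card_UNIV_bit: "CARD(bit) = 2"
  by (simp add: UNIV_bit)

lemma bit_eq_if_eq_iff: "((a::bit) = c \<longleftrightarrow> b = c) \<Longrightarrow> a = b"
  by (cases "c = 0") auto

lemma ex_bit_iff: "(\<exists>c::bit. P c) \<longleftrightarrow> P 0 \<or> P 1"
  by (metis bit_not_zero_iff)

lemma card_UNIV_bit_vec: "CARD(bit ^ 'n) = 2 ^ CARD('n)"
  by (simp add: card_UNIV_bit)

lemma bit_add_self [simp]: "(c::bit) + c = 0"
  by (cases "c = 0") simp_all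

lemma bit_add_cancel_left [simp]: "(c::bit) + (c + d) = d"
  by (simp add: add.assoc[symmetric])

lemma bit_add_eq_0_iff [simp]: "(c::bit) + d = 0 \<longleftrightarrow> c = d"
  by (metis bit_add_cancel_left bit_add_self)

lemma vec_bit_add_self [simp]: "(x::bit ^ 'n) + x = 0"
  by (simp add: vec_eq_iff)

lemma vec_bit_two_mult [simp]: "2 * (x::bit ^ 'n) = 0"
  by (simp add: vec_eq_iff)

lemma vec_bit_diff_eq_add [simp]: "(x::bit ^ 'n) - y = x + y"
  by (simp add: vec_eq_iff)

lemma vec_bit_add_cancel_left [simp]: "(x::bit ^ 'n) + (x + y) = y"
  by (simp add: add.assoc[symmetric])

lemma vec_bit_add_cancel_right [simp]: "(x::bit ^ 'n) + y + y = x"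
  by (simp add: add.assoc)

lemma mem_translate_iff: "x \<in> (+) v ` K \<longleftrightarrow> x + v \<in> K" for x v :: "bit ^ 'n"
proof
  assume "x + v \<in> K"
  then show "x \<in> (+) v ` K"
    by (rule rev_image_eqI) (simp add: add.commute)
qed (auto simp: add.commute)

lemma card_translate: "card ((+) v ` K) = card K" for v :: "'a :: group_add"
  by (simp add: card_image)

lemma subspace_bit_iff:
  "vec.subspace (U :: (bit ^ 'n) set) \<longleftrightarrow> 0 \<in> U \<and> (\<forall>x\<in>U. \<forall>y\<in>U. x + y \<in> U)"
proof
  assume closed: "0 \<in> U \<and> (\<forall>x\<in>U. \<forall>y\<in>U. x + y \<in> U)"
  moreover have "c *s x \<in> U" if "x \<in> U" for c x
    using closed that by (cases "c = 0") auto
  ultimately show "vec.subspace U"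
    unfolding vec.subspace_def by blast
qed (simp add: vec.subspace_def)

section \<open>Linear functionals on subspaces\<close>

text \<open>A linear functional on a subspace \<open>U\<close> is extended by \<open>0\<close> outside \<open>U\<close>, so that the
  functionals on \<open>U\<close> form a finite set of total functions that can be counted.\<close>

definition functionals :: "(bit ^ 'n) set \<Rightarrow> (bit ^ 'n \<Rightarrow> bit) set" where
  "functionals U =
     {\<phi>. (\<forall>x\<in>U. \<forall>y\<in>U. \<phi> (x + y) = \<phi> x + \<phi> y) \<and> (\<forall>x. x \<notin> U \<longrightarrow> \<phi> x = 0)}"

lemma functional_add: "\<phi> \<in> functionals U \<Longrightarrow> x \<in> U \<Longrightarrow> y \<in> U \<Longrightarrow> \<phi> (x + y) = \<phi> x + \<phi> y"
  by (simp add: functionals_def)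

lemma functional_outside: "\<phi> \<in> functionals U \<Longrightarrow> x \<notin> U \<Longrightarrow> \<phi> x = 0"
  by (simp add: functionals_def)

lemma functional_zero [simp]: "\<phi> \<in> functionals U \<Longrightarrow> \<phi> 0 = 0"
  using functional_add[of \<phi> U 0 0] functional_outside[of \<phi> U 0] by (cases "0 \<in> U") auto

lemma zero_in_functionals [simp]: "(\<lambda>_. 0) \<in> functionals U"
  by (simp add: functionals_def)

lemma functionals_zero_space: "functionals {0} = {\<lambda>_. 0}"
proof (intro equalityI subsetI)
  fix \<phi> :: "bit ^ 'n \<Rightarrow> bit"
  assume "\<phi> \<in> functionals {0}"
  then have "\<phi> x = 0" for x
    using functional_outside by (cases "x = 0") auto
  then show "\<phi> \<in> {\<lambda>_. 0}"
    by auto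
qed simp

lemma translate_kernel:
  assumes "vec.subspace U" "\<phi> \<in> functionals U" "w \<in> U"
  shows "(+) w ` {u \<in> U. \<phi> u = 0} = {u \<in> U. \<phi> u = \<phi> w}"
proof (rule set_eqI)
  fix x
  have "x + w \<in> U \<longleftrightarrow> x \<in> U"
    using assms(1,3) vec_bit_add_cancel_right[of x w] by (metis subspace_bit_iff)
  moreover have "\<phi> (x + w) = 0 \<longleftrightarrow> \<phi> x = \<phi> w" if "x \<in> U"
    using functional_add[OF assms(2) that assms(3)] by (cases "\<phi> w = 0") auto
  ultimately show "x \<in> (+) w ` {u \<in> U. \<phi> u = 0} \<longleftrightarrow> x \<in> {u \<in> U. \<phi> u = \<phi> w}"
    by (auto simp: mem_translate_iff)
qed

locale index_two =
  fixes K U :: "(bit ^ 'n) set" and v :: "bit ^ 'n"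
  assumes subspace_K: "vec.subspace K" and v_notin_K: "v \<notin> K" and U_eq: "U = K \<union> (+) v ` K"
begin

lemma zero_in_K: "0 \<in> K"
  using subspace_K by (simp add: subspace_bit_iff)

lemma add_in_K: "x \<in> K \<Longrightarrow> y \<in> K \<Longrightarrow> x + y \<in> K"
  using subspace_K by (simp add: subspace_bit_iff)

lemma mem_U_iff: "x \<in> U \<longleftrightarrow> x \<in> K \<or> x + v \<in> K"
  by (simp add: U_eq mem_translate_iff)

lemma v_in_U: "v \<in> U"
  by (simp add: mem_U_iff zero_in_K)

lemma K_subset_U: "K \<subseteq> U"
  by (simp add: U_eq)

lemma translate_notin_K: "x \<in> K \<Longrightarrow> x + v \<notin> K"
  using add_in_K[of x "x + v"] v_notin_K by auto

lemma card_U: "card U = 2 * card K"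
proof -
  have "K \<inter> (+) v ` K = {}"
    using translate_notin_K by (auto simp: mem_translate_iff add.commute)
  then show ?thesis
    by (simp add: U_eq card_Un_disjoint card_translate)
qed

lemma subspace_U: "vec.subspace U"
  unfolding subspace_bit_iff
proof (intro conjI ballI)
  fix x y
  assume "x \<in> U" "y \<in> U"
  moreover have "x + y = (x + v) + (y + v)"
    by (simp add: ac_simps)
  ultimately show "x + y \<in> U"
    unfolding mem_U_iff using add_in_K[of x y] add_in_K[of x "y + v"] add_in_K[of "x + v" y]
      add_in_K[of "x + v" "y + v"] by (auto simp: ac_simps)
qed (use K_subset_U zero_in_K in blast)

definition extend :: "(bit ^ 'n \<Rightarrow> bit) \<Rightarrow> bit \<Rightarrow> bit ^ 'n \<Rightarrow> bit" where
  "extend \<psi> c x = (if x \<in> K then \<psi> x else if x + v \<in> K then c + \<psi> (x + v) else 0)"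

lemma extend_v: "\<psi> \<in> functionals K \<Longrightarrow> extend \<psi> c v = c"
  by (simp add: extend_def v_notin_K zero_in_K)

lemma extend_add_K:
  assumes \<psi>: "\<psi> \<in> functionals K" and x: "x \<in> K" and y: "y \<in> U"
  shows "extend \<psi> c (x + y) = extend \<psi> c x + extend \<psi> c y"
proof (cases "y \<in> K")
  case True
  then show ?thesis
    using \<psi> x add_in_K functional_add by (simp add: extend_def)
next
  case False
  then have yv: "y + v \<in> K"
    using y mem_U_iff by blast
  have "x + y \<notin> K"
    using add_in_K[OF x, of "x + y"] False by auto
  moreover have "x + y + v \<in> K" "\<psi> (x + y + v) = \<psi> x + \<psi> (y + v)"
    using functional_add[OF \<psi> x yv] add_in_K[OF x yv] by (simp_all add: add.assoc)
  ultimately have "extend \<psi> c (x + y) = c + (\<psi> x + \<psi> (y + v))"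
    by (simp add: extend_def)
  moreover have "extend \<psi> c y = c + \<psi> (y + v)"
    using False yv by (simp add: extend_def)
  ultimately show ?thesis
    using x by (simp add: extend_def ac_simps)
qed

lemma extend_in_functionals:
  assumes \<psi>: "\<psi> \<in> functionals K"
  shows "extend \<psi> c \<in> functionals U"
  unfolding functionals_def
proof (intro CollectI conjI ballI allI impI)
  fix x y
  assume x: "x \<in> U" and y: "y \<in> U"
  consider "x \<in> K" | "y \<in> K" | "x \<notin> K" "y \<notin> K" "x + v \<in> K" "y + v \<in> K"
    using x y mem_U_iff by blast
  then show "extend \<psi> c (x + y) = extend \<psi> c x + extend \<psi> c y"
  proof cases
    case 1
    then show ?thesis
      using extend_add_K[OF \<psi> _ y] by simp
  next
    case 2
    then show ?thesis
      using extend_add_K[OF \<psi> 2 x] by (metis add.commute)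
  next
    case 3
    have sum: "(x + v) + (y + v) = x + y"
      by (simp add: ac_simps)
    have "x + y \<in> K" "\<psi> (x + y) = \<psi> (x + v) + \<psi> (y + v)"
      using add_in_K[OF 3(3,4)] functional_add[OF \<psi> 3(3,4)] unfolding sum by simp_all
    then show ?thesis
      using 3 by (simp add: extend_def ac_simps)
  qed
qed (simp add: extend_def mem_U_iff)

lemma extend_eq_iff:
  assumes "\<psi> \<in> functionals K" "\<psi>' \<in> functionals K"
  shows "extend \<psi> c = extend \<psi>' c' \<longleftrightarrow> \<psi> = \<psi>' \<and> c = c'"
  using assms extend_v functional_outside by (metis ext extend_def)

lemma bij_betw_extend: "bij_betw (\<lambda>(\<psi>, c). extend \<psi> c) (functionals K \<times> UNIV) (functionals U)"
proof (rule bij_betw_imageI)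
  show "inj_on (\<lambda>(\<psi>, c). extend \<psi> c) (functionals K \<times> UNIV)"
    by (auto intro: inj_onI simp: extend_eq_iff)
  show "(\<lambda>(\<psi>, c). extend \<psi> c) ` (functionals K \<times> UNIV) = functionals U"
  proof (intro equalityI subsetI)
    fix \<phi>
    assume \<phi>: "\<phi> \<in> functionals U"
    define \<psi> where "\<psi> x = (if x \<in> K then \<phi> x else 0)" for x
    have "\<phi> (x + y) = \<phi> x + \<phi> y" if "x \<in> K" "y \<in> K" for x y
      using functional_add[OF \<phi>] K_subset_U that by blast
    then have "\<psi> \<in> functionals K"
      by (simp add: functionals_def \<psi>_def add_in_K)
    moreover have "extend \<psi> (\<phi> v) = \<phi>"
    proof
      fix x
      have "\<phi> x = \<phi> v + \<phi> (x + v)" if "x + v \<in> K"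
        using functional_add[OF \<phi> v_in_U, of "x + v"] that K_subset_U by (auto simp: ac_simps)
      then show "extend \<psi> (\<phi> v) x = \<phi> x"
        using functional_outside[OF \<phi>] by (auto simp: extend_def \<psi>_def mem_U_iff)
    qed
    ultimately show "\<phi> \<in> (\<lambda>(\<psi>, c). extend \<psi> c) ` (functionals K \<times> UNIV)"
      by (auto intro: rev_image_eqI[of "(\<psi>, \<phi> v)"])
  qed (auto intro: extend_in_functionals)
qed

lemma card_functionals_U: "card (functionals U) = 2 * card (functionals K)"
  using bij_betw_same_card[OF bij_betw_extend] by (simp add: card_cartesian_product card_UNIV_bit)

end

lemma index_two_span_insert:
  assumes "v \<notin> vec.span S"
  shows "index_two (vec.span S) (vec.span (insert v S)) v"
proof
  show "vec.span (insert v S) = vec.span S \<union> (+) v ` vec.span S"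
    by (auto simp: vec.span_insert ex_bit_iff mem_translate_iff)
qed (simp_all add: assms)

lemma card_span_independent:
  assumes "vec.independent (S :: (bit ^ 'n) set)"
  shows "card (vec.span S) = 2 ^ card S \<and> card (functionals (vec.span S)) = 2 ^ card S"
  using finite[of S] assms
proof (induction S rule: finite_induct)
  case empty
  then show ?case
    by (simp add: functionals_zero_space)
next
  case (insert v S)
  then have "vec.independent S" and v: "v \<notin> vec.span S"
    by (simp_all add: vec.independent_insert)
  interpret index_two "vec.span S" "vec.span (insert v S)" v
    using v by (rule index_two_span_insert)
  show ?case
    using insert \<open>vec.independent S\<close> card_U card_functionals_U by simp
qed

lemma card_subspace_and_functionals:
  assumes "vec.subspace (U :: (bit ^ 'n) set)"
  shows "card U = 2 ^ vec.dim U \<and> card (functionals U) = card U"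
proof -
  obtain B where "B \<subseteq> U" "vec.independent B" "U \<subseteq> vec.span B" "card B = vec.dim U"
    using vec.basis_exists by blast
  moreover from this have "vec.span B = U"
    using assms vec.span_subspace by blast
  ultimately show ?thesis
    using card_span_independent by metis
qed

lemma card_subspace: "vec.subspace (U :: (bit ^ 'n) set) \<Longrightarrow> card U = 2 ^ vec.dim U"
  using card_subspace_and_functionals by blast

lemma card_functionals: "vec.subspace (U :: (bit ^ 'n) set) \<Longrightarrow> card (functionals U) = card U"
  using card_subspace_and_functionals by blast

lemma dim_eq_of_card: "vec.subspace (U :: (bit ^ 'n) set) \<Longrightarrow> card U = 2 ^ N \<Longrightarrow> vec.dim U = N"
  using card_subspace by fastforce

lemma index_two_kernel:
  assumes U: "vec.subspace U" and \<phi>: "\<phi> \<in> functionals U" and "\<phi> v = 1"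
  shows "index_two {u \<in> U. \<phi> u = 0} U v"
proof
  have "v \<in> U"
    using assms functional_outside by fastforce
  then have "(+) v ` {u \<in> U. \<phi> u = 0} = {u \<in> U. \<phi> u = 1}"
    using translate_kernel[OF U \<phi>] \<open>\<phi> v = 1\<close> by simp
  then show "U = {u \<in> U. \<phi> u = 0} \<union> (+) v ` {u \<in> U. \<phi> u = 0}"
    by auto
  show "vec.subspace {u \<in> U. \<phi> u = 0}"
    using U functional_add[OF \<phi>] \<phi> by (simp add: subspace_bit_iff)
qed (simp add: \<open>\<phi> v = 1\<close>)

lemma index_two_of_card:
  assumes K: "vec.subspace K" and U: "vec.subspace U" and "K \<subseteq> U"
    and card: "card U = 2 * card K" and "v \<in> U" "v \<notin> K"
  shows "index_two K U v"
proof -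
  interpret V: index_two K "K \<union> (+) v ` K" v
    using K \<open>v \<notin> K\<close> by unfold_locales simp_all
  have "K \<union> (+) v ` K \<subseteq> U"
    using U \<open>K \<subseteq> U\<close> \<open>v \<in> U\<close> by (auto simp: subspace_bit_iff)
  then have "K \<union> (+) v ` K = U"
    using card V.card_U by (simp add: card_subset_eq)
  then show ?thesis
    using V.index_two_axioms by simp
qed

lemma functional_with_kernel:
  assumes K: "vec.subspace K" and U: "vec.subspace U" and "K \<subseteq> U"
    and card: "card U = 2 * card K"
  obtains \<phi> where "\<phi> \<in> functionals U" "{u \<in> U. \<phi> u = 0} = K"
proof -
  have "card K \<noteq> 0"
    using K by (auto simp: subspace_bit_iff)
  then have "K \<noteq> U"
    using card by auto
  then obtain v where "v \<in> U" "v \<notin> K"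
    using \<open>K \<subseteq> U\<close> by blast
  then interpret index_two K U v
    using assms by (intro index_two_of_card)
  have "extend (\<lambda>_. 0) 1 \<in> functionals U"
    by (simp add: extend_in_functionals)
  moreover have "{u \<in> U. extend (\<lambda>_. 0) 1 u = 0} = K"
    using K_subset_U by (auto simp: extend_def mem_U_iff)
  ultimately show thesis
    using that by blast
qed

section \<open>Fourier coefficients\<close>

text \<open>\<open>char_sum B \<phi>\<close> is the Fourier coefficient of the indicator function of \<open>B\<close> at the
  character \<open>x \<mapsto> (-1)^\<phi> x\<close>.\<close>

definition char_sum :: "(bit ^ 'n) set \<Rightarrow> (bit ^ 'n \<Rightarrow> bit) \<Rightarrow> int" where
  "char_sum B \<phi> = (\<Sum>x\<in>B. if \<phi> x = 0 then 1 else -1)"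

definition fourier_support :: "(bit ^ 'n) set \<Rightarrow> (bit ^ 'n) set \<Rightarrow> (bit ^ 'n \<Rightarrow> bit) set" where
  "fourier_support U B = {\<phi> \<in> functionals U. char_sum B \<phi> \<noteq> 0}"

lemma card_eq_add_card_level_sets:
  "card B = card {x \<in> B. \<phi> x = 0} + card {x \<in> B. \<phi> x = 1}"
  for B :: "(bit ^ 'n) set" and \<phi> :: "bit ^ 'n \<Rightarrow> bit"
proof -
  have "card B = card ({x \<in> B. \<phi> x = 0} \<union> {x \<in> B. \<phi> x = 1})"
    by (rule arg_cong[where f = card]) auto
  also have "\<dots> = card {x \<in> B. \<phi> x = 0} + card {x \<in> B. \<phi> x = 1}"
    by (rule card_Un_disjoint) auto
  finally show ?thesis .
qed

lemma char_sum_eq_diff_card: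
  "char_sum B \<phi> = int (card {x \<in> B. \<phi> x = 0}) - int (card {x \<in> B. \<phi> x = 1})"
  by (simp add: char_sum_def sum.If_cases Int_def conj_commute)

lemma char_sum_zero_functional [simp]: "char_sum B (\<lambda>_. 0) = int (card B)"
  by (simp add: char_sum_def)

lemma (in index_two) char_sum_extend_pair:
  assumes "\<psi> \<in> functionals K" "B \<subseteq> U"
  shows "char_sum B (extend \<psi> 0) + char_sum B (extend \<psi> 1) = 2 * char_sum (B \<inter> K) \<psi>"
proof -
  have "(if extend \<psi> 0 x = 0 then 1 else -1) + (if extend \<psi> 1 x = 0 then 1 else -1) =
      2 * (if x \<in> K then if \<psi> x = 0 then 1 else -1 else (0::int))" if "x \<in> B" for x
    using that assms(2) by (auto simp: extend_def mem_U_iff)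
  then have "char_sum B (extend \<psi> 0) + char_sum B (extend \<psi> 1) =
      (\<Sum>x\<in>B. 2 * (if x \<in> K then if \<psi> x = 0 then 1 else -1 else 0))"
    unfolding char_sum_def sum.distrib[symmetric] by (rule sum.cong[OF refl])
  also have "\<dots> = 2 * char_sum (B \<inter> K) \<psi>"
    by (simp add: char_sum_def sum.inter_restrict sum_distrib_left)
  finally show ?thesis .
qed

lemma (in index_two) card_fourier_support_le:
  assumes "B \<subseteq> U"
  shows "card (fourier_support K (B \<inter> K)) \<le> card (fourier_support U B)"
proof -
  define f where
    "f \<psi> = (if char_sum B (extend \<psi> 0) \<noteq> 0 then extend \<psi> 0 else extend \<psi> 1)" for \<psi>
  have "inj_on f (fourier_support K (B \<inter> K))"
    by (rule inj_onI) (auto simp: f_def fourier_support_def extend_eq_iff split: if_splits)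
  moreover have "f \<psi> \<in> fourier_support U B" if "\<psi> \<in> fourier_support K (B \<inter> K)" for \<psi>
  proof -
    have "char_sum B (extend \<psi> 0) \<noteq> 0 \<or> char_sum B (extend \<psi> 1) \<noteq> 0"
      using that char_sum_extend_pair[OF _ assms, of \<psi>] by (auto simp: fourier_support_def)
    then show ?thesis
      using that by (auto simp: f_def fourier_support_def extend_in_functionals)
  qed
  ultimately show ?thesis
    by (intro card_inj_on_le) auto
qed

text \<open>The kernel of a functional at which the coefficient vanishes splits \<open>B\<close> evenly.\<close>

lemma halving_at_vanishing_coefficient:
  assumes U: "vec.subspace U" and "B \<subseteq> U" and \<phi>: "\<phi> \<in> functionals U" "char_sum B \<phi> = 0"
    and "B \<noteq> {}"
  obtains K where "vec.subspace K" "card U = 2 * card K" "card B = 2 * card (B \<inter> K)"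
    "card (fourier_support K (B \<inter> K)) \<le> card (fourier_support U B)"
proof -
  have "\<phi> \<noteq> (\<lambda>_. 0)"
    using \<phi>(2) \<open>B \<noteq> {}\<close> by auto
  then obtain v where "\<phi> v = 1"
    by (auto simp: fun_eq_iff)
  define K where "K = {u \<in> U. \<phi> u = 0}"
  interpret index_two K U v
    unfolding K_def using U \<phi>(1) \<open>\<phi> v = 1\<close> by (rule index_two_kernel)
  have "B \<inter> K = {x \<in> B. \<phi> x = 0}"
    using \<open>B \<subseteq> U\<close> by (auto simp: K_def)
  then have "card B = 2 * card (B \<inter> K)"
    using \<phi>(2) card_eq_add_card_level_sets[of B \<phi>] by (simp add: char_sum_eq_diff_card)
  then show thesis
    using that subspace_K card_U card_fourier_support_le \<open>B \<subseteq> U\<close> by blast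
qed

lemma card_fourier_support_lower_bound:
  assumes "vec.subspace U" "B \<subseteq> U" "\<not> 2 ^ t dvd card B"
  shows "2 * card U \<le> 2 ^ t * card (fourier_support U B)"
  using assms
proof (induction t arbitrary: U B)
  case 0
  then show ?case
    by simp
next
  case (Suc t)
  consider "fourier_support U B = functionals U"
    | \<phi> where "\<phi> \<in> functionals U" "char_sum B \<phi> = 0"
    by (auto simp: fourier_support_def)
  then show ?case
  proof cases
    case 1
    have "2 * card U \<le> 2 * 2 ^ t * card U"
      by (intro mult_le_mono1) simp
    then show ?thesis
      using 1 card_functionals[OF Suc.prems(1)] by simp
  next
    case 2
    moreover have "B \<noteq> {}"
      using Suc.prems(3) by auto
    ultimately obtain K where K: "vec.subspace K" "card U = 2 * card K"
      "card B = 2 * card (B \<inter> K)" "card (fourier_support K (B \<inter> K)) \<le> card (fourier_support U B)"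
      using halving_at_vanishing_coefficient Suc.prems(1,2) by metis
    then have "2 * card K \<le> 2 ^ t * card (fourier_support K (B \<inter> K))"
      using Suc.IH[of K "B \<inter> K"] Suc.prems(3) by auto
    then show ?thesis
      using K(2,4) by (simp add: mult.commute order_trans)
  qed
qed

section \<open>Hyperplanes of a flat\<close>

lemma translate_subspace_in_flats:
  "vec.subspace U \<Longrightarrow> vec.dim U = d \<Longrightarrow> (+) x0 ` U \<in> flats d"
  by (auto simp: flats_def)

lemma card_flat: "Q \<in> flats d \<Longrightarrow> card Q = 2 ^ d"
  by (auto simp: flats_def card_translate card_subspace)

lemma translate_subspace_rebase:
  fixes q r :: "bit ^ 'n"
  assumes "q \<in> (+) r ` V" "vec.subspace V"
  shows "(+) r ` V = (+) q ` V"
proof -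
  have "q + r \<in> V"
    using assms(1) by (simp add: mem_translate_iff)
  have "x + r \<in> V \<longleftrightarrow> x + q \<in> V" for x
  proof -
    have "x + q = (x + r) + (q + r)" "x + r = (x + q) + (q + r)"
      by (simp_all add: ac_simps)
    then show ?thesis
      using vec.subspace_add[OF assms(2) _ \<open>q + r \<in> V\<close>] by metis
  qed
  then show ?thesis
    by (auto simp: set_eq_iff mem_translate_iff)
qed

lemma flat_dim_le: "Q \<in> flats d \<Longrightarrow> d \<le> CARD('n)" for Q :: "(bit ^ 'n) set"
proof -
  assume "Q \<in> flats d"
  then have "2 ^ d \<le> (2::nat) ^ CARD('n)"
    using card_flat card_mono[of UNIV Q] by (metis card_UNIV_bit_vec finite subset_UNIV)
  then show ?thesis
    by simp
qed

definition affine_hyperplane ::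
  "bit ^ 'n \<Rightarrow> (bit ^ 'n) set \<Rightarrow> (bit ^ 'n \<Rightarrow> bit) \<Rightarrow> bit \<Rightarrow> (bit ^ 'n) set" where
  "affine_hyperplane x0 U \<phi> c = (+) x0 ` {u \<in> U. \<phi> u = c}"

lemma affine_hyperplane_in_flats:
  assumes U: "vec.subspace U" "vec.dim U = Suc d"
    and \<phi>: "\<phi> \<in> functionals U" "\<phi> \<noteq> (\<lambda>_. 0)"
  shows "affine_hyperplane x0 U \<phi> c \<in> flats d"
proof -
  obtain v where "\<phi> v = 1"
    using \<phi>(2) by (auto simp: fun_eq_iff)
  define K where "K = {u \<in> U. \<phi> u = 0}"
  interpret index_two K U v
    unfolding K_def using U(1) \<phi>(1) \<open>\<phi> v = 1\<close> by (rule index_two_kernel)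
  have "vec.dim K = d"
    using card_U card_subspace[OF U(1)] U(2) by (intro dim_eq_of_card subspace_K) simp
  define w where "w = (if c = 0 then 0 else v)"
  have "w \<in> U" "\<phi> w = c"
    using v_in_U zero_in_K K_subset_U \<phi>(1) \<open>\<phi> v = 1\<close> by (auto simp: w_def)
  then have "{u \<in> U. \<phi> u = c} = (+) w ` K"
    using translate_kernel[OF U(1) \<phi>(1) \<open>w \<in> U\<close>] by (simp add: K_def)
  then have "affine_hyperplane x0 U \<phi> c = (+) (x0 + w) ` K"
    by (simp add: affine_hyperplane_def image_image add.assoc)
  then show ?thesis
    using subspace_K \<open>vec.dim K = d\<close> by (simp add: translate_subspace_in_flats)
qed

lemma affine_hyperplane_inj:
  assumes \<phi>: "\<phi> \<in> functionals U" and \<phi>': "\<phi>' \<in> functionals U" and "0 \<in> U"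
    and eq: "affine_hyperplane x0 U \<phi> c = affine_hyperplane x0 U \<phi>' c'"
  shows "\<phi> = \<phi>' \<and> c = c'"
proof -
  have levels: "{u \<in> U. \<phi> u = c} = {u \<in> U. \<phi>' u = c'}"
    using eq by (simp add: affine_hyperplane_def inj_image_eq_iff)
  have "c = 0 \<longleftrightarrow> c' = 0"
    using levels[THEN eqset_imp_iff, of 0] \<open>0 \<in> U\<close> \<phi> \<phi>' by auto
  then have "c = c'"
    by (rule bit_eq_if_eq_iff)
  moreover have "\<phi> u = \<phi>' u" for u
  proof (cases "u \<in> U")
    case True
    then show ?thesis
      using levels[THEN eqset_imp_iff, of u] \<open>c = c'\<close> by (auto intro: bit_eq_if_eq_iff)
  qed (simp add: functional_outside[OF \<phi>] functional_outside[OF \<phi>'])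
  ultimately show ?thesis
    by auto
qed

lemma flat_eq_affine_hyperplane:
  assumes U: "vec.subspace U" "vec.dim U = Suc d"
    and Q: "Q \<in> flats d" "Q \<subseteq> (+) x0 ` U"
  obtains \<phi> c where "\<phi> \<in> functionals U" "\<phi> \<noteq> (\<lambda>_. 0)" "Q = affine_hyperplane x0 U \<phi> c"
proof -
  obtain q K where QK: "Q = (+) q ` K" and K: "vec.subspace K" "vec.dim K = d"
    using Q(1) by (auto simp: flats_def)
  have "0 \<in> K"
    using K(1) by (simp add: subspace_bit_iff)
  then have w: "q + x0 \<in> U"
    using Q(2) QK by (auto simp: mem_translate_iff)
  have "K \<subseteq> U"
  proof
    fix k
    assume "k \<in> K"
    then have "q + k + x0 \<in> U"
      using Q(2) QK by (auto simp: mem_translate_iff)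
    moreover have "(q + k + x0) + (q + x0) = k"
      by (simp add: ac_simps)
    ultimately show "k \<in> U"
      using vec.subspace_add[OF U(1) _ w] by metis
  qed
  moreover have "card U = 2 * card K"
    using U K by (simp add: card_subspace)
  ultimately obtain \<phi> where \<phi>: "\<phi> \<in> functionals U" and ker: "{u \<in> U. \<phi> u = 0} = K"
    using functional_with_kernel K(1) U(1) by blast
  have "\<phi> \<noteq> (\<lambda>_. 0)"
    using ker \<open>card U = 2 * card K\<close> \<open>0 \<in> K\<close> by (auto simp: card_gt_0_iff)
  have "Q = (+) x0 ` (+) (q + x0) ` K"
    by (simp add: QK image_image ac_simps)
  also have "\<dots> = affine_hyperplane x0 U \<phi> (\<phi> (q + x0))"
    using translate_kernel[OF U(1) \<phi> w] by (simp add: ker affine_hyperplane_def)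
  finally show thesis
    using \<phi> \<open>\<phi> \<noteq> (\<lambda>_. 0)\<close> that by blast
qed

lemma bij_betw_affine_hyperplanes:
  assumes "vec.subspace U" "vec.dim U = Suc d"
  shows "bij_betw (\<lambda>(\<phi>, c). affine_hyperplane x0 U \<phi> c) ((functionals U - {\<lambda>_. 0}) \<times> UNIV)
           {Q \<in> flats d. Q \<subseteq> (+) x0 ` U}"
proof (rule bij_betw_imageI)
  have "0 \<in> U"
    using assms(1) by (simp add: subspace_bit_iff)
  then show "inj_on (\<lambda>(\<phi>, c). affine_hyperplane x0 U \<phi> c) ((functionals U - {\<lambda>_. 0}) \<times> UNIV)"
    by (intro inj_onI) (clarsimp simp: affine_hyperplane_inj)
  show "(\<lambda>(\<phi>, c). affine_hyperplane x0 U \<phi> c) ` ((functionals U - {\<lambda>_. 0}) \<times> UNIV) =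
      {Q \<in> flats d. Q \<subseteq> (+) x0 ` U}"
  proof (intro equalityI subsetI)
    fix Q
    assume "Q \<in> (\<lambda>(\<phi>, c). affine_hyperplane x0 U \<phi> c) ` ((functionals U - {\<lambda>_. 0}) \<times> UNIV)"
    then obtain \<phi> c where "\<phi> \<in> functionals U" "\<phi> \<noteq> (\<lambda>_. 0)" "Q = affine_hyperplane x0 U \<phi> c"
      by auto
    moreover from this have "Q \<in> flats d"
      using affine_hyperplane_in_flats[OF assms] by blast
    ultimately show "Q \<in> {Q \<in> flats d. Q \<subseteq> (+) x0 ` U}"
      by (auto simp: affine_hyperplane_def)
  next
    fix Q
    assume "Q \<in> {Q \<in> flats d. Q \<subseteq> (+) x0 ` U}"
    then obtain \<phi> c where "\<phi> \<in> functionals U" "\<phi> \<noteq> (\<lambda>_. 0)" "Q = affine_hyperplane x0 U \<phi> c"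
      using flat_eq_affine_hyperplane[OF assms] by blast
    then show "Q \<in> (\<lambda>(\<phi>, c). affine_hyperplane x0 U \<phi> c) ` ((functionals U - {\<lambda>_. 0}) \<times> UNIV)"
      by (intro rev_image_eqI[of "(\<phi>, c)"]) auto
  qed
qed

lemma card_flats_in_flat:
  assumes "R \<in> flats (Suc d)"
  shows "card {Q \<in> flats d. Q \<subseteq> R} = 2 * (2 ^ Suc d - 1)"
proof -
  obtain x0 U where R: "R = (+) x0 ` U" and U: "vec.subspace U" "vec.dim U = Suc d"
    using assms by (auto simp: flats_def)
  have "card {Q \<in> flats d. Q \<subseteq> R} = card ((functionals U - {\<lambda>_. 0}) \<times> (UNIV :: bit set))"
    unfolding R using bij_betw_same_card[OF bij_betw_affine_hyperplanes[OF U]] by simp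
  also have "\<dots> = 2 * (2 ^ Suc d - 1)"
    using U by (simp add: card_cartesian_product card_Diff_singleton card_functionals
        card_subspace card_UNIV_bit)
  finally show ?thesis .
qed

lemma card_affine_hyperplane_inter:
  "card (affine_hyperplane x0 U \<phi> c \<inter> A) = card {u \<in> U \<inter> (+) x0 ` A. \<phi> u = c}"
proof -
  have "affine_hyperplane x0 U \<phi> c \<inter> A = (+) x0 ` {u \<in> U \<inter> (+) x0 ` A. \<phi> u = c}"
    by (auto simp: affine_hyperplane_def set_eq_iff mem_translate_iff)
  then show ?thesis
    by (simp add: card_translate)
qed

lemma card_fourier_support_ge:
  assumes U: "vec.subspace U" "vec.dim U = Suc d" and "B \<subseteq> U"
    and "card B = 2 * s" "s = j * 2 ^ k" "odd j"
  shows "2 ^ (d - k) \<le> card (fourier_support U B)"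
proof -
  have "\<not> 2 ^ (k + 2) dvd card B"
    using assms(4-6) by (simp add: power_add)
  then have "2 * 2 ^ Suc d \<le> 2 ^ (k + 2) * card (fourier_support U B)"
    using card_fourier_support_lower_bound[OF U(1) \<open>B \<subseteq> U\<close>] U card_subspace by metis
  then have bound: "2 ^ d \<le> 2 ^ k * card (fourier_support U B)"
    by (simp add: power_add)
  show ?thesis
  proof (cases "k \<le> d")
    case True
    then have "2 ^ k * 2 ^ (d - k) \<le> 2 ^ k * card (fourier_support U B)"
      using bound by (simp add: power_add[symmetric])
    then show ?thesis
      by simp
  next
    case False
    then show ?thesis
      using bound by (cases "card (fourier_support U B)") auto
  qed
qed

definition meeting_pairs ::
  "(bit ^ 'n) set \<Rightarrow> (bit ^ 'n) set \<Rightarrow> nat \<Rightarrow> ((bit ^ 'n \<Rightarrow> bit) \<times> bit) set" where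
  "meeting_pairs U B s =
    {(\<phi>, c) \<in> (functionals U - {\<lambda>_. 0}) \<times> UNIV. card {u \<in> B. \<phi> u = c} = s}"

lemma card_meeting_pairs_unbalanced:
  fixes U B :: "(bit ^ 'n) set"
  assumes "vec.subspace U" "card B \<noteq> 2 * s"
  shows "card (meeting_pairs U B s) \<le> card U - 1"
proof -
  have unique: "c = c'" if "card {u \<in> B. \<phi> u = c} = s" "card {u \<in> B. \<phi> u = c'} = s"
    for \<phi> :: "bit ^ 'n \<Rightarrow> bit" and c c'
  proof (rule ccontr)
    assume "c \<noteq> c'"
    then have "c = 0 \<and> c' = 1 \<or> c = 1 \<and> c' = 0"
      by (cases "c = 0") auto
    then have "card B = s + s"
      using that card_eq_add_card_level_sets[of B \<phi>] by auto
    then show False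
      using assms(2) by simp
  qed
  have "inj_on fst (meeting_pairs U B s)"
  proof (rule inj_onI)
    fix p p'
    assume "p \<in> meeting_pairs U B s" "p' \<in> meeting_pairs U B s" "fst p = fst p'"
    then show "p = p'"
      using unique[of "fst p" "snd p" "snd p'"] by (cases p; cases p') (auto simp: meeting_pairs_def)
  qed
  moreover have "fst ` meeting_pairs U B s \<subseteq> functionals U - {\<lambda>_. 0}"
    by (auto simp: meeting_pairs_def)
  ultimately have "card (meeting_pairs U B s) \<le> card (functionals U - {\<lambda>_. 0})"
    by (intro card_inj_on_le) auto
  then show ?thesis
    using assms(1) by (simp add: card_Diff_singleton card_functionals)
qed

lemma card_meeting_pairs_balanced:
  fixes U B :: "(bit ^ 'n) set"
  assumes "vec.subspace U" "card B = 2 * s"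
  shows "card (meeting_pairs U B s) \<le> 2 * (card U - card (fourier_support U B))"
proof -
  have "\<phi> \<notin> fourier_support U B" if "card {u \<in> B. \<phi> u = c} = s"
    for \<phi> :: "bit ^ 'n \<Rightarrow> bit" and c
  proof -
    have "card {u \<in> B. \<phi> u = 0} = s \<and> card {u \<in> B. \<phi> u = 1} = s"
      using that assms(2) card_eq_add_card_level_sets[of B \<phi>] by (cases "c = 0") auto
    then show ?thesis
      by (simp add: fourier_support_def char_sum_eq_diff_card)
  qed
  then have "meeting_pairs U B s \<subseteq> (functionals U - fourier_support U B) \<times> UNIV"
    by (auto simp: meeting_pairs_def)
  then have "card (meeting_pairs U B s) \<le> card ((functionals U - fourier_support U B) \<times> (UNIV :: bit set))"
    by (intro card_mono) auto
  also have "\<dots> = 2 * (card U - card (fourier_support U B))"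
    using assms(1) by (simp add: card_cartesian_product card_UNIV_bit card_Diff_subset
        fourier_support_def card_functionals)
  finally show ?thesis .
qed

lemma card_meeting_pairs_le:
  assumes U: "vec.subspace U" "vec.dim U = Suc d" and "B \<subseteq> U"
    and s: "s = j * 2 ^ k" "odd j"
  shows "card (meeting_pairs U B s) \<le> 2 * (2 ^ Suc d - 2 ^ (d - k))"
proof (cases "card B = 2 * s")
  case False
  have "(2::nat) ^ (d - k) \<le> 2 ^ d"
    by (rule power_increasing) auto
  then show ?thesis
    using card_meeting_pairs_unbalanced[OF U(1) False] U by (simp add: card_subspace; arith)
next
  case True
  then show ?thesis
    using card_meeting_pairs_balanced[OF U(1) True] card_fourier_support_ge[OF U \<open>B \<subseteq> U\<close> True s]
      U by (simp add: card_subspace)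
qed

lemma card_flats_in_flat_meeting:
  assumes "R \<in> flats (Suc d)" "s = j * 2 ^ k" "odd j"
  shows "card {Q \<in> flats d. card (Q \<inter> A) = s \<and> Q \<subseteq> R} \<le> 2 * (2 ^ Suc d - 2 ^ (d - k))"
proof -
  obtain x0 U where R: "R = (+) x0 ` U" and U: "vec.subspace U" "vec.dim U = Suc d"
    using assms(1) by (auto simp: flats_def)
  define h where "h = (\<lambda>(\<phi>, c). affine_hyperplane x0 U \<phi> c)"
  define P where "P = meeting_pairs U (U \<inter> (+) x0 ` A) s"
  have bij: "bij_betw h ((functionals U - {\<lambda>_. 0}) \<times> UNIV) {Q \<in> flats d. Q \<subseteq> R}"
    unfolding h_def R by (rule bij_betw_affine_hyperplanes[OF U])
  have "P = {p \<in> (functionals U - {\<lambda>_. 0}) \<times> UNIV. card (h p \<inter> A) = s}"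
    by (auto simp: P_def h_def meeting_pairs_def card_affine_hyperplane_inter)
  then have "h ` P = {Q \<in> h ` ((functionals U - {\<lambda>_. 0}) \<times> UNIV). card (Q \<inter> A) = s}"
    by auto
  then have "{Q \<in> flats d. card (Q \<inter> A) = s \<and> Q \<subseteq> R} = h ` P"
    using bij_betw_imp_surj_on[OF bij] by auto
  moreover have "inj_on h P"
    using bij_betw_imp_inj_on[OF bij] by (rule inj_on_subset) (auto simp: P_def meeting_pairs_def)
  ultimately have "card {Q \<in> flats d. card (Q \<inter> A) = s \<and> Q \<subseteq> R} = card P"
    by (simp add: card_image)
  also have "\<dots> \<le> 2 * (2 ^ Suc d - 2 ^ (d - k))"
    unfolding P_def using card_meeting_pairs_le[OF U _ assms(2,3)] by blast
  finally show ?thesis .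
qed

section \<open>Flats through a flat\<close>

definition extend_flat :: "bit ^ 'n \<Rightarrow> (bit ^ 'n) set \<Rightarrow> bit ^ 'n \<Rightarrow> (bit ^ 'n) set" where
  "extend_flat q K w = (+) q ` (K \<union> (+) w ` K)"

lemma extend_flat_in_flats:
  assumes "vec.subspace K" "vec.dim K = d" "w \<notin> K"
  shows "extend_flat q K w \<in> flats (Suc d)"
proof -
  interpret index_two K "K \<union> (+) w ` K" w
    using assms by unfold_locales simp_all
  have "vec.dim (K \<union> (+) w ` K) = Suc d"
    using card_U assms by (intro dim_eq_of_card subspace_U) (simp add: card_subspace)
  then show ?thesis
    using subspace_U by (simp add: extend_flat_def translate_subspace_in_flats)
qed

lemma superflat_eq_translate:
  assumes K: "vec.subspace K" "vec.dim K = d"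
    and R: "R \<in> flats (Suc d)" "(+) q ` K \<subseteq> R"
  obtains V where "R = (+) q ` V" "vec.subspace V" "K \<subseteq> V" "card V = 2 * card K"
proof -
  obtain r V where R': "R = (+) r ` V" and V: "vec.subspace V" "vec.dim V = Suc d"
    using R(1) by (auto simp: flats_def)
  have "q \<in> R"
    using R(2) K(1) by (force simp: subspace_bit_iff)
  then have "R = (+) q ` V"
    using R' V(1) translate_subspace_rebase by blast
  moreover from this have "K \<subseteq> V"
    using R(2) by (simp add: inj_image_subset_iff)
  moreover have "card V = 2 * card K"
    using K V by (simp add: card_subspace)
  ultimately show thesis
    using that V(1) by blast
qed

lemma extend_flat_fiber:
  assumes K: "vec.subspace K" and V: "vec.subspace V" "K \<subseteq> V" "card V = 2 * card K"
  shows "{w \<in> - K. extend_flat q K w = (+) q ` V} = V - K"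
proof (intro equalityI subsetI)
  fix w
  assume w: "w \<in> {w \<in> - K. extend_flat q K w = (+) q ` V}"
  have "0 \<in> K"
    using K by (simp add: subspace_bit_iff)
  then have "q + w \<in> extend_flat q K w"
    by (force simp: extend_flat_def)
  then show "w \<in> V - K"
    using w by (auto simp: inj_image_mem_iff)
next
  fix w
  assume "w \<in> V - K"
  then interpret index_two K V w
    using assms by (intro index_two_of_card) auto
  show "w \<in> {w \<in> - K. extend_flat q K w = (+) q ` V}"
    using v_notin_K U_eq by (simp add: extend_flat_def)
qed

text \<open>Each \<open>(d+1)\<close>-flat through \<open>Q = q + K\<close> is \<open>extend_flat q K w\<close> for exactly \<open>2^d\<close> of the
  \<open>2^n - 2^d\<close> vectors \<open>w \<notin> K\<close>.\<close>

lemma card_superflats: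
  fixes Q :: "(bit ^ 'n) set"
  assumes "Q \<in> flats d"
  shows "card {R \<in> flats (Suc d). Q \<subseteq> R} = 2 ^ (CARD('n) - d) - 1"
proof -
  obtain q K where Q: "Q = (+) q ` K" and K: "vec.subspace K" "vec.dim K = d"
    using assms by (auto simp: flats_def)
  define Rs where "Rs = {R \<in> flats (Suc d). Q \<subseteq> R}"
  have "{R \<in> Rs. extend_flat q K w = R} = {extend_flat q K w}" if "w \<in> - K" for w
    using that K extend_flat_in_flats by (auto simp: Rs_def Q extend_flat_def)
  then have "card (- K) = (\<Sum>w\<in>- K. card {R \<in> Rs. extend_flat q K w = R})"
    by simp
  also have "\<dots> = 2 ^ d * card Rs"
  proof (intro sum_multicount ballI)
    fix R
    assume "R \<in> Rs"
    then have "R \<in> flats (Suc d)" "(+) q ` K \<subseteq> R"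
      by (simp_all add: Rs_def Q)
    then obtain V where "R = (+) q ` V" "vec.subspace V" "K \<subseteq> V" "card V = 2 * card K"
      by (rule superflat_eq_translate[OF K])
    then show "card {w \<in> - K. extend_flat q K w = R} = 2 ^ d"
      using extend_flat_fiber[OF K(1)] K by (simp add: card_Diff_subset card_subspace)
  qed auto
  finally have "2 ^ d * card Rs = 2 ^ CARD('n) - 2 ^ d"
    using K by (simp add: card_Diff_subset Compl_eq_Diff_UNIV card_subspace card_UNIV_bit)
  moreover have "(2::nat) ^ CARD('n) = 2 ^ d * 2 ^ (CARD('n) - d)"
    using flat_dim_le[OF assms] by (simp add: power_add[symmetric])
  ultimately have "2 ^ d * card Rs = 2 ^ d * (2 ^ (CARD('n) - d) - 1)"
    by (simp add: diff_mult_distrib2)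
  then show ?thesis
    by (simp add: Rs_def)
qed

lemma flat_count_ratio_eq:
  "real (2 * (2 ^ Suc d - 2 ^ (d - k))) / real (2 * (2 ^ Suc d - 1)) =
    1 - ((2::real) ^ (d - k) - 1) / (2 ^ (d + 1) - 1)"
proof -
  have "(2::nat) ^ (d - k) \<le> 2 ^ Suc d"
    by (rule power_increasing) auto
  moreover have "(1::real) < 2 ^ (d + 1)"
    by (rule one_less_power) auto
  ultimately show ?thesis
    by (simp add: field_simps)
qed

theorem proposition3p2:
  fixes d s j k :: nat and A :: "(bit ^ 'n) set"
  assumes "d \<ge> 1" and "1 < s" and "s < 2 ^ d"
    and "s = j * 2 ^ k" and "odd j"
    and "CARD('n) \<ge> d + 1"
  shows "lambda_star d s A \<le> 1 - ((2::real) ^ (d - k) - 1) / ((2::real) ^ (d + 1) - 1)"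
proof -
  let ?F = "flats d :: (bit ^ 'n) set set"
  let ?good = "{Q \<in> ?F. card (Q \<inter> A) = s}"
  have "card ?good * (2 * (2 ^ Suc d - 1)) \<le> 2 * (2 ^ Suc d - 2 ^ (d - k)) * card ?F"
  proof (rule double_counting_le[where I = "(\<subseteq>)" and T = "flats (Suc d)"])
    show "card {R \<in> flats (Suc d). Q \<subseteq> R} = 2 ^ (CARD('n) - d) - 1" if "Q \<in> ?F" for Q
      using that by (rule card_superflats)
    show "0 < (2::nat) ^ (CARD('n) - d) - 1"
      using assms(6) one_less_power[of "2::nat" "CARD('n) - d"] by simp
    show "card {Q \<in> ?F. Q \<subseteq> R} = 2 * (2 ^ Suc d - 1)" if "R \<in> flats (Suc d)" for R
      using that by (rule card_flats_in_flat)
    show "card {Q \<in> ?good. Q \<subseteq> R} \<le> 2 * (2 ^ Suc d - 2 ^ (d - k))" if "R \<in> flats (Suc d)" for R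
      using card_flats_in_flat_meeting[OF that assms(4,5), of A] by simp
  qed auto
  then have "lambda_star d s A \<le> real (2 * (2 ^ Suc d - 2 ^ (d - k))) / real (2 * (2 ^ Suc d - 1))"
    unfolding lambda_star_def by (rule of_nat_ratio_le) (use one_less_power[of "2::nat" "Suc d"] in simp)
  also have "\<dots> = 1 - ((2::real) ^ (d - k) - 1) / ((2::real) ^ (d + 1) - 1)"
    by (rule flat_count_ratio_eq)
  finally show ?thesis .
qed

end
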